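(* Let $K$ be an arbitrary field, $E$ an $n$-dimensional $K$-vector space ($n\ge1$), and $m=\lfloor n/2\rfloor+1$. Then $\bigwedge^mE\otimes\bigwedge^{n-m}E$ is spanned by the images of the maps $\psi(r,m)$, $1\le r\le m$.
   Context: For $1\le r\le m$, $\psi(r,m):\bigwedge^{m-r}E\otimes\bigwedge^{n-m+r}E\to\bigwedge^mE\otimes\bigwedge^{n-m}E$ is the composition of $1\otimes\Delta:\bigwedge^{m-r}E\otimes\bigwedge^{n-m+r}E\to\bigwedge^{m-r}E\otimes\bigwedge^rE\otimes\bigwedge^{n-m}E$, where $\Delta:\bigwedge^{n-m+r}E\to\bigwedge^rE\otimes\bigwedge^{n-m}E$ is the component of the comultiplication of the exterior algebra (i.e. $\Delta(v_1\wedge\dots\wedge v_k)=\sum_{S}\pm v_S\otimes v_{S^c}$ over $r$-element subsets $S\subset[1,k]$ with the shuffle sign), followed by exterior multiplication $\bigwedge^{m-r}E\otimes\bigwedge^rE\to\bigwedge^mE$ on the first two factors. *)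

theory Defs
  imports Complex_Main "HOL-Library.Function_Algebras"
begin

text \<open>E = K^n with basis e_0,...,e_(n-1). The k-th exterior power
has basis e_S = e_(s_1) wedge ... wedge e_(s_k) for S a k-subset of {0..<n}
with s_1 < ... < s_k. An element of (wedge^a E) tensor (wedge^b E) is a
coefficient function on pairs (S,T), with coefficient of e_S tensor e_T.\<close>

definition ext_tensor :: "nat \<Rightarrow> nat \<Rightarrow> nat \<Rightarrow> ((nat set \<times> nat set) \<Rightarrow> 'a::field) set" where
  "ext_tensor n a b = {f. \<forall>S T. f (S, T) \<noteq> 0 \<longrightarrow>
       S \<subseteq> {..<n} \<and> card S = a \<and> T \<subseteq> {..<n} \<and> card T = b}"

text \<open>Sign with e_S wedge e_U = wsign S U * e_(S union U) for disjoint finite S, U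
(number of inversions: pairs s in S, u in U with s > u).\<close>
definition wsign :: "nat set \<Rightarrow> nat set \<Rightarrow> 'a::field" where
  "wsign S U = (-1) ^ card {(s, u). s \<in> S \<and> u \<in> U \<and> u < s}"

text \<open>Coefficient of e_A tensor e_B in psi(r,m)(e_S tensor e_T).
Delta(e_T) = sum over r-subsets U of T of wsign U (T-U) * e_U tensor e_(T-U);
then e_S wedge e_U = 0 if S meets U, else wsign S U * e_(S union U).\<close>
definition psi_coeff :: "nat \<Rightarrow> nat set \<Rightarrow> nat set \<Rightarrow> nat set \<Rightarrow> nat set \<Rightarrow> 'a::field" where
  "psi_coeff r S T A B =
     (let U = T - B in
      if B \<subseteq> T \<and> card U = r \<and> S \<inter> U = {} \<and> A = S \<union> U
      then wsign U B * wsign S U else 0)"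

definition psi :: "nat \<Rightarrow> nat \<Rightarrow> nat \<Rightarrow> ((nat set \<times> nat set) \<Rightarrow> 'a::field)
                     \<Rightarrow> ((nat set \<times> nat set) \<Rightarrow> 'a)" where
  "psi n r m f = (\<lambda>(A, B).
     (\<Sum>(S, T) \<in> {S. S \<subseteq> {..<n} \<and> card S = m - r} \<times> {T. T \<subseteq> {..<n} \<and> card T = n - m + r}.
        f (S, T) * psi_coeff r S T A B))"

abbreviation kspan :: "((nat set \<times> nat set) \<Rightarrow> 'a::field) set \<Rightarrow> ((nat set \<times> nat set) \<Rightarrow> 'a) set" where
  "kspan X \<equiv> module.span (\<lambda>c f x. c * f x) X"

end

theory Submission
  imports Defs "HOL-Library.Indicator_Function"
begin

text \<open>Fix a basis vector e_A \<otimes> e_B with |A| = m, |B| = n - m, and let C = A \<inter> B, W = A \<union> B,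
P = A - B. For each proper subset V of P, with r = |P| - |V| \<ge> 1, \<psi>(r,m) maps
e_(C \<union> V) \<otimes> e_(W - V) to \<plusminus>H_V, where H_V is a signed sum of the vectors e_(C \<union> P') \<otimes> e_(W - P')
over the |P|-subsets P' of W - C containing V. In the sum of the (-1)^|V| H_V over all V \<subset> P, the
coefficient of the term indexed by P' is an alternating sum over the subsets of P \<inter> P' (the proper
ones if P' = P). Since 2m > n, any two |P|-subsets of W - C meet, so these sums vanish unless
P' = P, and what remains is \<plusminus>e_A \<otimes> e_B.\<close>

lemma sum_fun_apply: "(\<Sum>i\<in>I. f i) x = (\<Sum>i\<in>I. f i x)"
  by (induction I rule: infinite_finite_induct) auto

lemma module_pointwise_scale: "module (\<lambda>(c::'a::field) (f::'b \<Rightarrow> 'a) x. c * f x)"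
  by unfold_locales (auto simp: fun_eq_iff algebra_simps)

lemma subspace_supported_funs:
  "module.subspace (\<lambda>c f x. c * f x) {f :: 'b \<Rightarrow> 'a::field. \<forall>x. f x \<noteq> 0 \<longrightarrow> x \<in> I}"
proof -
  interpret module "\<lambda>(c::'a) (f::'b \<Rightarrow> 'a) x. c * f x"
    by (rule module_pointwise_scale)
  show ?thesis
    by (rule subspaceI) (auto, metis add_0)
qed

lemma fun_eq_sum_indicator:
  fixes f :: "'b \<Rightarrow> 'a::ring_1"
  assumes "finite I" "\<And>x. f x \<noteq> 0 \<Longrightarrow> x \<in> I"
  shows "f = (\<Sum>x\<in>I. (\<lambda>y. f x * indicator {x} y))"
proof
  fix y
  have "(\<Sum>x\<in>I. (\<lambda>y. f x * indicator {x} y)) y = (\<Sum>x\<in>I. if y = x then f x else 0)"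
    unfolding sum_fun_apply by (intro sum.cong) auto
  also have "\<dots> = f y"
    using assms by auto
  finally show "f y = (\<Sum>x\<in>I. (\<lambda>y. f x * indicator {x} y)) y" ..
qed

lemma in_span_if_indicators_in_span:
  fixes f :: "'b \<Rightarrow> 'a::field"
  assumes "finite I" "\<And>x. f x \<noteq> 0 \<Longrightarrow> x \<in> I"
    and "\<And>x. x \<in> I \<Longrightarrow> indicator {x} \<in> module.span (\<lambda>c g y. c * g y) X"
  shows "f \<in> module.span (\<lambda>c g y. c * g y) X"
proof -
  interpret module "\<lambda>(c::'a) (g::'b \<Rightarrow> 'a) y. c * g y" by (rule module_pointwise_scale)
  show ?thesis
    by (subst fun_eq_sum_indicator[OF assms(1,2)]) (auto intro!: span_sum span_scale assms(3))
qed

lemma sum_neg_one_power_card_Pow: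
  assumes "finite I" "I \<noteq> {}"
  shows "(\<Sum>V\<in>Pow I. (-1::'a::ring_1) ^ card V) = 0"
  using assms by (intro sum_alternating_cancels)
    (auto simp: Pow_def dest: card_subsupersets_even_odd[of I "{}"])

lemma sum_neg_one_power_card_proper_subsets:
  assumes "finite D" "P \<subseteq> D" "P' \<subseteq> D" "card P' = card P" "card D < 2 * card P"
  shows "(\<Sum>V | V \<subset> P \<and> V \<subseteq> P'. (-1::'a::ring_1) ^ card V) = (if P' = P then - ((-1) ^ card P) else 0)"
proof -
  have fin: "finite P" "finite P'"
    using assms finite_subset by auto
  have "P \<noteq> {}"
    using assms by auto
  show ?thesis
  proof (cases "P' = P")
    case True
    then have "{V. V \<subset> P \<and> V \<subseteq> P'} = Pow P - {P}"
      by auto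
    with True show ?thesis
      using sum_neg_one_power_card_Pow[OF fin(1) \<open>P \<noteq> {}\<close>] fin by (simp add: sum_diff1)
  next
    case False
    then have "\<not> P \<subseteq> P'"
      using fin assms(4) card_subset_eq by metis
    then have subsets: "{V. V \<subset> P \<and> V \<subseteq> P'} = Pow (P \<inter> P')"
      by auto
    have "card P + card P' \<le> card D"
      if "P \<inter> P' = {}"
      using card_Un_disjoint[OF fin that] card_mono[OF assms(1), of "P \<union> P'"] assms(2,3) by simp
    then have "P \<inter> P' \<noteq> {}"
      using assms(4,5) by linarith
    with False show ?thesis
      unfolding subsets using fin sum_neg_one_power_card_Pow[of "P \<inter> P'"] by simp
  qed
qed

lemma wsign_mult_self: "wsign S U * wsign S U = (1::'a::field)"
  unfolding wsign_def by (simp flip: power_mult_distrib)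

lemma neg_one_power_card_Un:
  assumes "finite X" "finite Y" "X \<inter> Y = {}"
  shows "(-1::'a::ring_1) ^ card (X \<union> Y) = (-1) ^ card X * (-1) ^ card Y"
  using assms by (simp add: card_Un_disjoint power_add)

lemma wsign_Un_left:
  assumes "finite X" "finite Y" "finite Z" "X \<inter> Y = {}"
  shows "(wsign (X \<union> Y) Z :: 'a::field) = wsign X Z * wsign Y Z"
proof -
  have "{(s, u). s \<in> X \<union> Y \<and> u \<in> Z \<and> u < s}
      = {(s, u). s \<in> X \<and> u \<in> Z \<and> u < s} \<union> {(s, u). s \<in> Y \<and> u \<in> Z \<and> u < s}"
    by auto
  moreover have "finite {(s, u). s \<in> X \<and> u \<in> Z \<and> u < s}" "finite {(s, u). s \<in> Y \<and> u \<in> Z \<and> u < s}"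
    using assms by (auto intro: finite_subset[of _ "X \<times> Z"] finite_subset[of _ "Y \<times> Z"])
  ultimately show ?thesis
    unfolding wsign_def using assms(4) by (subst neg_one_power_card_Un[symmetric]) auto
qed

lemma wsign_Un_right:
  assumes "finite X" "finite Y" "finite Z" "X \<inter> Y = {}"
  shows "(wsign Z (X \<union> Y) :: 'a::field) = wsign Z X * wsign Z Y"
proof -
  have "{(s, u). s \<in> Z \<and> u \<in> X \<union> Y \<and> u < s}
      = {(s, u). s \<in> Z \<and> u \<in> X \<and> u < s} \<union> {(s, u). s \<in> Z \<and> u \<in> Y \<and> u < s}"
    by auto
  moreover have "finite {(s, u). s \<in> Z \<and> u \<in> X \<and> u < s}" "finite {(s, u). s \<in> Z \<and> u \<in> Y \<and> u < s}"
    using assms by (auto intro: finite_subset[of _ "Z \<times> X"] finite_subset[of _ "Z \<times> Y"])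
  ultimately show ?thesis
    unfolding wsign_def using assms(4) by (subst neg_one_power_card_Un[symmetric]) auto
qed

lemma wsign_swap:
  assumes "finite X" "finite Y" "X \<inter> Y = {}"
  shows "(wsign X Y :: 'a::field) * wsign Y X = (-1) ^ (card X * card Y)"
proof -
  let ?L = "{(s, u). s \<in> X \<and> u \<in> Y \<and> u < s}"
  let ?R = "{(s, u). s \<in> X \<and> u \<in> Y \<and> s < u}"
  have "{(s, u). s \<in> Y \<and> u \<in> X \<and> u < s} = prod.swap ` ?R"
    by (auto simp: image_iff)
  then have card_R: "card {(s, u). s \<in> Y \<and> u \<in> X \<and> u < s} = card ?R"
    by (simp add: card_image swap_inj_on)
  have "finite ?L" "finite ?R"
    by (rule finite_subset[of _ "X \<times> Y"], use assms in auto)+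
  moreover have "?L \<inter> ?R = {}"
    by auto
  ultimately have "card ?L + card ?R = card (?L \<union> ?R)"
    by (simp add: card_Un_disjoint)
  also have "?L \<union> ?R = X \<times> Y"
    using assms(3) by auto
  finally have "card ?L + card ?R = card X * card Y"
    by (simp add: card_cartesian_product)
  then show ?thesis
    unfolding wsign_def card_R by (simp only: power_add[symmetric])
qed

lemma wsign_regroup:
  assumes "finite C" "finite V" "finite U" "finite Y"
    and "C \<inter> V = {}" "C \<inter> U = {}" "C \<inter> Y = {}" "V \<inter> U = {}" "V \<inter> Y = {}" "U \<inter> Y = {}"
  shows "wsign U (C \<union> Y) * wsign (C \<union> V) U
       = (-1) ^ (card U * card C) * wsign V (U \<union> Y) * (wsign (V \<union> U) Y :: 'a::field)"
proof -
  have "wsign U (C \<union> Y) * wsign (C \<union> V) U = (wsign U C * wsign C U) * (wsign U Y * (wsign V U :: 'a))"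
    using assms by (simp add: wsign_Un_left wsign_Un_right ac_simps)
  also have "wsign U C * wsign C U = ((-1) ^ (card U * card C) :: 'a)"
    using assms by (simp add: wsign_swap Int_commute)
  also have "wsign U Y * wsign V U = wsign V (U \<union> Y) * (wsign (V \<union> U) Y :: 'a)"
  proof -
    have "wsign V (U \<union> Y) * wsign (V \<union> U) Y = (wsign V Y * wsign V Y) * (wsign U Y * (wsign V U :: 'a))"
      using assms by (simp add: wsign_Un_left wsign_Un_right ac_simps)
    then show ?thesis
      by (simp add: wsign_mult_self)
  qed
  finally show ?thesis
    by (simp only: mult.assoc)
qed

lemma finite_card_subsets: "finite {S. S \<subseteq> {..<(n::nat)} \<and> card S = k}"
  by (rule finite_subset[of _ "Pow {..<n}"]) auto

lemma ext_tensor_eq_supported_funs: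
  "ext_tensor n a b
     = {f. \<forall>x. f x \<noteq> 0 \<longrightarrow> x \<in> {S. S \<subseteq> {..<n} \<and> card S = a} \<times> {T. T \<subseteq> {..<n} \<and> card T = b}}"
  unfolding ext_tensor_def by (simp add: split_paired_All)

lemma indicator_in_ext_tensor:
  assumes "S \<subseteq> {..<n}" "card S = a" "T \<subseteq> {..<n}" "card T = b"
  shows "indicator {(S, T)} \<in> ext_tensor n a b"
  using assms unfolding ext_tensor_def by (auto simp: indicator_def)

lemma psi_indicator:
  assumes "S \<subseteq> {..<n}" "card S = m - r" "T \<subseteq> {..<n}" "card T = n - m + r"
  shows "(psi n r m (indicator {(S, T)}) (A, B) :: 'a::field) = psi_coeff r S T A B"
proof -
  have "psi n r m (indicator {(S, T)}) (A, B)
      = (\<Sum>x\<in>{S. S \<subseteq> {..<n} \<and> card S = m - r} \<times> {T. T \<subseteq> {..<n} \<and> card T = n - m + r}.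
          if x = (S, T) then (psi_coeff r S T A B :: 'a) else 0)"
    unfolding psi_def by (simp only: prod.case) (rule sum.cong, auto split: prod.splits)
  also have "\<dots> = psi_coeff r S T A B"
    using assms finite_card_subsets by (subst sum.delta) auto
  finally show ?thesis .
qed

lemma psi_in_ext_tensor:
  fixes f :: "_ \<Rightarrow> 'a::field"
  assumes "r \<le> m"
  shows "psi n r m f \<in> ext_tensor n m (n - m)"
  unfolding ext_tensor_def
proof (intro CollectI allI impI)
  fix A B assume "psi n r m f (A, B) \<noteq> 0"
  then obtain S T where ST: "S \<subseteq> {..<n}" "card S = m - r" "T \<subseteq> {..<n}" "card T = n - m + r"
    and "psi_coeff r S T A B \<noteq> (0::'a)"
    unfolding psi_def by (auto elim!: sum.not_neutral_contains_not_neutral)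
  then have cond: "B \<subseteq> T" "card (T - B) = r" "S \<inter> (T - B) = {}" "A = S \<union> (T - B)"
    unfolding psi_coeff_def Let_def by (auto split: if_splits)
  have "finite S" "finite T"
    using ST by (auto intro: finite_subset[of _ "{..<n}"])
  then have "card A = card S + r"
    using cond by (simp add: card_Un_disjoint)
  moreover have "card B = card T - r"
    using cond \<open>finite T\<close> card_Diff_subset[of "T - B" T] by (simp add: double_diff)
  ultimately show "A \<subseteq> {..<n} \<and> card A = m \<and> B \<subseteq> {..<n} \<and> card B = n - m"
    using ST cond assms by auto
qed

text \<open>supset_sum C W p V is the vector H_V of the proof idea; V \<subseteq> A - B with |A - B| = p
means A = C \<union> P' and B = W - P' for a p-subset P' \<supseteq> V of W - C.\<close>
definition supset_sum :: "nat set \<Rightarrow> nat set \<Rightarrow> nat \<Rightarrow> nat set \<Rightarrow> nat set \<times> nat set \<Rightarrow> 'a::field" where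
  "supset_sum C W p V = (\<lambda>(A, B).
     if V \<subseteq> A - B \<and> A \<inter> B = C \<and> A \<union> B = W \<and> card (A - B) = p then wsign (A - B) (B - A) else 0)"

text \<open>The left-hand side is the condition under which psi_coeff r (C \<union> V) (W - V) A B is nonzero.\<close>
lemma psi_coeff_condition_iff:
  assumes "finite W" "C \<subseteq> W" "V \<subseteq> W - C" "card V + r = p"
  shows "(B \<subseteq> W - V \<and> card (W - V - B) = r \<and> (C \<union> V) \<inter> (W - V - B) = {} \<and> A = C \<union> V \<union> (W - V - B))
     \<longleftrightarrow> (V \<subseteq> A - B \<and> A \<inter> B = C \<and> A \<union> B = W \<and> card (A - B) = p)"
proof
  assume psi: "B \<subseteq> W - V \<and> card (W - V - B) = r \<and> (C \<union> V) \<inter> (W - V - B) = {} \<and> A = C \<union> V \<union> (W - V - B)"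
  then have diff: "A - B = V \<union> (W - V - B)"
    using assms(2,3) by blast
  have "finite V"
    using assms(1,3) finite_subset by blast
  then have "card (A - B) = card V + card (W - V - B)"
    unfolding diff using assms(1) by (intro card_Un_disjoint) auto
  then show "V \<subseteq> A - B \<and> A \<inter> B = C \<and> A \<union> B = W \<and> card (A - B) = p"
    using psi assms by (auto simp: diff)
next
  assume sup: "V \<subseteq> A - B \<and> A \<inter> B = C \<and> A \<union> B = W \<and> card (A - B) = p"
  then have diff: "W - V - B = A - B - V"
    by blast
  have "finite (A - B)"
    using sup assms(1) by (metis finite_Diff finite_Un)
  then have "card (A - B - V) = r"
    using sup assms(4) by (subst card_Diff_subset) (auto intro: finite_subset)
  then show "B \<subseteq> W - V \<and> card (W - V - B) = r \<and> (C \<union> V) \<inter> (W - V - B) = {} \<and> A = C \<union> V \<union> (W - V - B)"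
    using sup assms unfolding diff by auto
qed

lemma psi_coeff_eq_supset_sum:
  assumes "finite W" "C \<subseteq> W" "V \<subseteq> W - C" "card V + r = p"
  shows "(psi_coeff r (C \<union> V) (W - V) A B :: 'a::field)
       = (-1) ^ (r * card C) * wsign V (W - C - V) * supset_sum C W p V (A, B)"
proof (cases "V \<subseteq> A - B \<and> A \<inter> B = C \<and> A \<union> B = W \<and> card (A - B) = p")
  case False
  then show ?thesis
    using psi_coeff_condition_iff[OF assms, of B A] unfolding psi_coeff_def supset_sum_def Let_def by auto
next
  case True
  then have psi: "B \<subseteq> W - V \<and> card (W - V - B) = r \<and> (C \<union> V) \<inter> (W - V - B) = {} \<and> A = C \<union> V \<union> (W - V - B)"
    using psi_coeff_condition_iff[OF assms, of B A] by blast
  define U where "U = W - V - B"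
  define Y where "Y = B - C"
  have parts: "B = C \<union> Y" "A - B = V \<union> U" "B - A = Y" "W - C - V = U \<union> Y"
    using True psi assms unfolding U_def Y_def by blast+
  have disjoint: "C \<inter> V = {}" "C \<inter> U = {}" "C \<inter> Y = {}" "V \<inter> U = {}" "V \<inter> Y = {}" "U \<inter> Y = {}"
    using True psi assms unfolding U_def Y_def by blast+
  have finite: "finite C" "finite V" "finite U" "finite Y"
    using assms True unfolding U_def Y_def by (auto intro: finite_subset)
  have "psi_coeff r (C \<union> V) (W - V) A B = wsign U (C \<union> Y) * (wsign (C \<union> V) U :: 'a)"
    using psi parts(1) unfolding psi_coeff_def Let_def U_def by simp
  also have "\<dots> = (-1) ^ (r * card C) * wsign V (U \<union> Y) * wsign (V \<union> U) Y"
    using wsign_regroup[OF finite disjoint] psi unfolding U_def by simp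
  also have "\<dots> = (-1) ^ (r * card C) * wsign V (W - C - V) * supset_sum C W p V (A, B)"
    using True parts unfolding supset_sum_def by simp
  finally show ?thesis .
qed

lemma psi_indicator_eq_supset_sum:
  assumes "W \<subseteq> {..<n}" "C \<subseteq> W" "V \<subseteq> W - C" "card V + r = p"
    and "card (C \<union> V) = m - r" "card (W - V) = n - m + r"
  shows "psi n r m (indicator {(C \<union> V, W - V)})
       = (\<lambda>x. (-1) ^ (r * card C) * wsign V (W - C - V) * (supset_sum C W p V x :: 'a::field))"
proof
  fix x :: "nat set \<times> nat set"
  have "finite W"
    using assms(1) by (rule finite_subset) simp
  have subsets: "C \<union> V \<subseteq> {..<n}" "W - V \<subseteq> {..<n}"
    using assms(1-3) by auto
  show "psi n r m (indicator {(C \<union> V, W - V)}) x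
      = (-1) ^ (r * card C) * wsign V (W - C - V) * (supset_sum C W p V x :: 'a)"
    using psi_indicator[OF subsets(1) assms(5) subsets(2) assms(6), of "fst x" "snd x", where 'a='a]
      psi_coeff_eq_supset_sum[OF \<open>finite W\<close> assms(2-4), of "fst x" "snd x", where 'a='a]
    by simp
qed

lemma sum_supset_sum:
  assumes "finite W" "C \<subseteq> W" "P \<subseteq> W - C" "card (W - C) < 2 * card P"
  shows "(\<Sum>V | V \<subset> P. (-1) ^ card V * supset_sum C W (card P) V x)
       = (if x = (C \<union> P, W - P) then - ((-1) ^ card P * wsign P (W - C - P)) else (0::'a::field))"
proof -
  obtain A B where x: "x = (A, B)"
    by fastforce
  have "finite {V. V \<subset> P}"
    using assms(1,3) by (auto intro: finite_subset[of _ "Pow P"] finite_subset[of P])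
  show ?thesis
  proof (cases "A \<inter> B = C \<and> A \<union> B = W \<and> card (A - B) = card P")
    case False
    have "C \<union> P - (W - P) = P" "(C \<union> P) \<inter> (W - P) = C" "C \<union> P \<union> (W - P) = W"
      using assms(2,3) by blast+
    then have "x \<noteq> (C \<union> P, W - P)"
      using False x by auto
    moreover have "supset_sum C W (card P) V x = (0::'a)" for V
      using False unfolding supset_sum_def x by auto
    ultimately show ?thesis
      by simp
  next
    case True
    have "(\<Sum>V | V \<subset> P. (-1) ^ card V * supset_sum C W (card P) V x)
        = (\<Sum>V | V \<subset> P. if V \<subseteq> A - B then wsign (A - B) (B - A) * (-1) ^ card V else (0::'a))"
      unfolding supset_sum_def x using True by (intro sum.cong) auto
    also have "\<dots> = wsign (A - B) (B - A) * (\<Sum>V | V \<subset> P \<and> V \<subseteq> A - B. (-1) ^ card V)"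
      using \<open>finite {V. V \<subset> P}\<close> by (simp add: sum.inter_filter[symmetric] sum_distrib_left)
    also have "\<dots> = (if A - B = P then - (wsign (A - B) (B - A) * (-1) ^ card P) else 0)"
      using True assms by (subst sum_neg_one_power_card_proper_subsets[of "W - C"]) auto
    also have "\<dots> = (if x = (C \<union> P, W - P) then - ((-1) ^ card P * wsign P (W - C - P)) else 0)"
    proof (cases "A - B = P")
      case diff: True
      have "x = (C \<union> P, W - P)" "B - A = W - C - P"
        using True diff unfolding x by blast+
      with diff show ?thesis
        by (simp add: mult.commute)
    next
      case False
      then have "x \<noteq> (C \<union> P, W - P)"
        using x assms(2,3) by blast
      with False show ?thesis
        by simp
    qed
    finally show ?thesis .
  qed
qed

definition psi_images :: "nat \<Rightarrow> nat \<Rightarrow> ((nat set \<times> nat set) \<Rightarrow> 'a::field) set" where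
  "psi_images n m = (\<Union>r\<in>{1..m}. psi n r m ` ext_tensor n (m - r) (n - m + r))"

lemma supset_sum_in_span_psi_images:
  assumes "W \<subseteq> {..<n}" "C \<subseteq> W" "V \<subseteq> W - C" "card V < p"
    and "card C + p = m" "card W + card C = n" "m \<le> n"
  shows "(supset_sum C W p V :: _ \<Rightarrow> 'a::field) \<in> kspan (psi_images n m)"
proof -
  interpret module "\<lambda>(c::'a) (f::nat set \<times> nat set \<Rightarrow> 'a) x. c * f x"
    by (rule module_pointwise_scale)
  define r where "r = p - card V"
  have r: "r \<in> {1..m}" "card V + r = p"
    using assms(4,5) unfolding r_def by auto
  have finite: "finite W" "finite V"
    using assms(1,3) by (auto intro: finite_subset[of _ "{..<n}"])
  have "card (C \<union> V) = card C + card V"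
    using finite assms(2,3) by (intro card_Un_disjoint) (auto intro: finite_subset)
  then have S: "C \<union> V \<subseteq> {..<n}" "card (C \<union> V) = m - r"
    using assms(1-3,5) r(2) by auto
  have "card (W - V) = card W - card V"
    using finite assms(3) by (intro card_Diff_subset) auto
  then have T: "W - V \<subseteq> {..<n}" "card (W - V) = n - m + r"
    using assms(1,4-7) r(2) by auto
  define \<epsilon> where "\<epsilon> = (-1) ^ (r * card C) * (wsign V (W - C - V) :: 'a)"
  have "\<epsilon> * \<epsilon> = 1"
    unfolding \<epsilon>_def by (simp add: mult_ac wsign_mult_self)
  have "(psi n r m (indicator {(C \<union> V, W - V)}) :: _ \<Rightarrow> 'a) \<in> psi_images n m"
    using indicator_in_ext_tensor[OF S T] r(1) unfolding psi_images_def by blast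
  then have "(\<lambda>x. \<epsilon> * supset_sum C W p V x) \<in> psi_images n m"
    unfolding \<epsilon>_def psi_indicator_eq_supset_sum[OF assms(1-3) r(2) S(2) T(2)] .
  then have "(\<lambda>y. \<epsilon> * (\<lambda>x. \<epsilon> * supset_sum C W p V x) y) \<in> span (psi_images n m)"
    by (intro span_scale span_base)
  then show ?thesis
    using \<open>\<epsilon> * \<epsilon> = 1\<close> by (simp add: mult.assoc[symmetric])
qed

lemma indicator_eq_sum_supset_sum:
  assumes "finite W" "C \<subseteq> W" "P \<subseteq> W - C" "card (W - C) < 2 * card P"
  defines "\<kappa> \<equiv> - ((-1) ^ card P * (wsign P (W - C - P) :: 'a::field))"
  shows "indicator {(C \<union> P, W - P)} = (\<Sum>V | V \<subset> P. (\<lambda>x. \<kappa> * (-1) ^ card V * supset_sum C W (card P) V x))"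
proof
  fix x :: "nat set \<times> nat set"
  have "(\<Sum>V | V \<subset> P. (\<lambda>x. \<kappa> * (-1) ^ card V * supset_sum C W (card P) V x)) x
      = \<kappa> * (\<Sum>V | V \<subset> P. (-1) ^ card V * supset_sum C W (card P) V x)"
    unfolding sum_fun_apply by (simp add: sum_distrib_left mult.assoc)
  also have "\<dots> = \<kappa> * (if x = (C \<union> P, W - P) then \<kappa> else 0)"
    unfolding sum_supset_sum[OF assms(1-4)] \<kappa>_def by simp
  also have "\<dots> = indicator {(C \<union> P, W - P)} x"
    unfolding \<kappa>_def by (simp add: mult_ac wsign_mult_self)
  finally show "indicator {(C \<union> P, W - P)} x
      = (\<Sum>V | V \<subset> P. (\<lambda>x. \<kappa> * (-1) ^ card V * supset_sum C W (card P) V x)) x" ..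
qed

lemma indicator_in_span_psi_images:
  assumes "n < 2 * m" "A \<subseteq> {..<n}" "card A = m" "B \<subseteq> {..<n}" "card B = n - m"
  shows "(indicator {(A, B)} :: _ \<Rightarrow> 'a::field) \<in> kspan (psi_images n m)"
proof -
  interpret module "\<lambda>(c::'a) (f::nat set \<times> nat set \<Rightarrow> 'a) x. c * f x"
    by (rule module_pointwise_scale)
  define C where "C = A \<inter> B"
  define W where "W = A \<union> B"
  define P where "P = A - B"
  have finite: "finite A" "finite B" "finite W"
    using assms(2,4) unfolding W_def by (auto intro: finite_subset[of _ "{..<n}"])
  have "m \<le> n"
    using assms(2,3) by (metis card_lessThan card_mono finite_lessThan)
  have card_C_P: "card C + card P = m"
    unfolding C_def P_def using assms(3) card_Int_Diff[OF finite(1), of B] by simp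
  have card_W_C: "card W + card C = n"
    unfolding W_def C_def using card_Un_Int[OF finite(1,2)] assms(3,5) \<open>m \<le> n\<close> by simp
  have sets: "C \<subseteq> W" "P \<subseteq> W - C" "W \<subseteq> {..<n}" "A = C \<union> P" "B = W - P"
    unfolding C_def W_def P_def using assms(2,4) by auto
  have "card (W - C) = card W - card C" "card C \<le> card W"
    using sets(1) finite unfolding C_def W_def by (auto intro: card_Diff_subset card_mono)
  then have "card (W - C) < 2 * card P"
    using card_C_P card_W_C assms(1) by linarith
  have "supset_sum C W (card P) V \<in> span (psi_images n m)" if "V \<subset> P" for V
    using supset_sum_in_span_psi_images[OF sets(3,1), of V "card P" m] that sets(2) card_C_P card_W_C \<open>m \<le> n\<close>
      finite psubset_card_mono[of P V] unfolding P_def by auto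
  then show ?thesis
    unfolding sets(4,5) indicator_eq_sum_supset_sum[OF finite(3) sets(1,2) \<open>card (W - C) < 2 * card P\<close>]
    by (intro span_sum span_scale) auto
qed

theorem span_psi_images_eq_ext_tensor:
  assumes "n < 2 * m"
  shows "kspan (psi_images n m) = (ext_tensor n m (n - m) :: (_ \<Rightarrow> 'a::field) set)"
proof -
  interpret module "\<lambda>(c::'a) (f::nat set \<times> nat set \<Rightarrow> 'a) x. c * f x"
    by (rule module_pointwise_scale)
  have "psi_images n m \<subseteq> ext_tensor n m (n - m)"
    unfolding psi_images_def using psi_in_ext_tensor by auto
  then have "span (psi_images n m) \<subseteq> ext_tensor n m (n - m)"
    using subspace_supported_funs unfolding ext_tensor_eq_supported_funs by (rule span_minimal)
  moreover have "f \<in> span (psi_images n m)" if f: "f \<in> ext_tensor n m (n - m)" for f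
  proof (rule in_span_if_indicators_in_span)
    let ?I = "{A. A \<subseteq> {..<n} \<and> card A = m} \<times> {B. B \<subseteq> {..<n} \<and> card B = n - m}"
    show "finite ?I"
      using finite_card_subsets by simp
    show "x \<in> ?I" if "f x \<noteq> 0" for x
      using f that unfolding ext_tensor_eq_supported_funs by blast
    show "indicator {x} \<in> span (psi_images n m)" if "x \<in> ?I" for x
      using that indicator_in_span_psi_images[OF assms] by (cases x) auto
  qed
  ultimately show ?thesis
    by blast
qed

theorem lemma5:
  fixes n m :: nat
  assumes "n \<ge> 1" and "m = n div 2 + 1"
  shows "kspan (\<Union>r\<in>{1..m}. psi n r m ` (ext_tensor n (m - r) (n - m + r) :: ((nat set \<times> nat set) \<Rightarrow> 'a::field) set))
         = ext_tensor n m (n - m)"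
proof -
  \<comment> \<open>Only 2m > n matters.\<close>
  have "n < 2 * m"
    using assms(2) by simp
  then show ?thesis
    using span_psi_images_eq_ext_tensor unfolding psi_images_def by blast
qed

end
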